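(* In the setting below, if $\bar A$ is a global minimizer of $\min_{A\in\mathbb{R}^{n\times m}}\sum_{t=0}^{T-1}\|(\bar A-A)f(x_t)+\bar d_t\|_2$, then $$\Big\|\sum_{t\in\mathcal K} f(x_t)\hat d_t^\top\Big\|_F\le \sum_{t\in\mathcal K^c}\|f(x_t)\|_2 .$$ Moreover, when $m=1$, this condition is also sufficient for $\bar A$ to be a global minimizer.
   Context: $f:\mathbb{R}^n\to\mathbb{R}^m$ is given, $\bar A\in\mathbb{R}^{n\times m}$, $\bar d_0,\dots,\bar d_{T-1}\in\mathbb{R}^n$, and $x_0=0_n$, $x_{t+1}=\bar A f(x_t)+\bar d_t$ for $t=0,\dots,T-1$. $\mathcal K:=\{t\in\{0,\dots,T-1\}:\bar d_t\ne 0\}$, $\mathcal K^c:=\{0,\dots,T-1\}\setminus\mathcal K$, $\hat d_t:=\bar d_t/\|\bar d_t\|_2$ for $t\in\mathcal K$; $\|\cdot\|_F$ is the Frobenius norm. *)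

theory Defs
  imports "HOL-Analysis.Analysis"
begin

text \<open>Vectors in R^n are real^'n; an n x m matrix is real^'m^'n (rows indexed by 'n).\<close>

fun traj :: "(real^'n \<Rightarrow> real^'m) \<Rightarrow> real^'m^'n \<Rightarrow> (nat \<Rightarrow> real^'n) \<Rightarrow> nat \<Rightarrow> real^'n" where
  "traj f A d 0 = 0"
| "traj f A d (Suc t) = A *v f (traj f A d t) + d t"

definition frob_norm :: "real^'c^'r \<Rightarrow> real" where
  "frob_norm M = sqrt (\<Sum>i\<in>UNIV. \<Sum>j\<in>UNIV. (M $ i $ j)^2)"

definition outer :: "real^'m \<Rightarrow> real^'n \<Rightarrow> real^'n^'m" where
  "outer u v = (\<chi> i j. u $ i * v $ j)"

definition cost :: "(real^'n \<Rightarrow> real^'m) \<Rightarrow> real^'m^'n \<Rightarrow> (nat \<Rightarrow> real^'n) \<Rightarrow> nat \<Rightarrow> real^'m^'n \<Rightarrow> real" where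
  "cost f Abar d T A = (\<Sum>t<T. norm ((Abar - A) *v f (traj f Abar d t) + d t))"

definition is_global_min :: "(real^'n \<Rightarrow> real^'m) \<Rightarrow> real^'m^'n \<Rightarrow> (nat \<Rightarrow> real^'n) \<Rightarrow> nat \<Rightarrow> bool" where
  "is_global_min f Abar d T \<longleftrightarrow> (\<forall>A. cost f Abar d T Abar \<le> cost f Abar d T A)"

end

theory Submission imports Defs begin

text \<open>Write \<open>A = Abar - H\<close>. Then the cost is
  \<open>F H = (\<Sum>t\<in>K. \<parallel>d t + H z t\<parallel>) + (\<Sum>t\<in>Kc. \<parallel>H z t\<parallel>)\<close> with \<open>z t = f (x t)\<close>, and \<open>Abar\<close> is a
  global minimizer iff \<open>H = 0\<close> minimizes \<open>F\<close>. To first order,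
  \<open>F H - F 0 \<approx> \<langle>M, H\<^sup>T\<rangle> + (\<Sum>t\<in>Kc. \<parallel>H z t\<parallel>)\<close> with \<open>M = (\<Sum>t\<in>K. z t (sgn (d t))\<^sup>T)\<close>,
  and the first-order term is a lower bound of \<open>F H - F 0\<close> by convexity.
  Testing the direction \<open>H = -e M\<^sup>T\<close> for small \<open>e > 0\<close> gives \<open>\<parallel>M\<parallel>\<^sub>F \<le> \<Sum>t\<in>Kc. \<parallel>z t\<parallel>\<close>.
  Conversely, \<open>\<langle>M, H\<^sup>T\<rangle> \<ge> -\<parallel>M\<parallel>\<^sub>F \<parallel>H\<parallel>\<^sub>F\<close>, and for \<open>m = 1\<close> the Kc-part equals
  \<open>\<parallel>H\<parallel>\<^sub>F \<Sum>t\<in>Kc. \<parallel>z t\<parallel>\<close> exactly, so the condition makes the first-order term nonnegative.\<close>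

lemma frob_norm_eq_norm: "frob_norm (M::real^'c^'r) = norm M"
proof -
  have "M \<bullet> M = (\<Sum>i\<in>UNIV. \<Sum>j\<in>UNIV. (M $ i $ j)^2)"
    by (simp add: inner_vec_def power2_eq_square)
  then show ?thesis by (simp add: frob_norm_def norm_eq_sqrt_inner)
qed

lemma inner_matrix_vector_mult_eq_inner_outer:
  "(v::real^'n) \<bullet> ((H::real^'m^'n) *v z) = outer z v \<bullet> transpose H"
  by (simp add: inner_vec_def matrix_vector_mult_def outer_def transpose_def sum_distrib_left
        mult_ac sum.swap[of _ "UNIV::'n set"])

lemma norm_transpose: "norm (transpose (M::real^'c^'r)) = norm M"
proof -
  have "transpose M \<bullet> transpose M = M \<bullet> M"
    by (simp add: inner_vec_def transpose_def sum.swap[of _ "UNIV::'r set"])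
  then show ?thesis by (simp add: norm_eq_sqrt_inner)
qed

lemma norm_matrix_vector_mult_le: "norm ((H::real^'m^'n) *v z) \<le> norm H * norm z"
proof -
  have "norm (H *v z) ^ 2 = (\<Sum>i\<in>UNIV. (H $ i \<bullet> z)^2)"
    unfolding power2_norm_eq_inner
    by (simp add: inner_vec_def matrix_vector_mult_def power2_eq_square)
  also have "\<dots> \<le> (\<Sum>i\<in>UNIV. (norm (H $ i))^2 * (norm z)^2)"
  proof (rule sum_mono)
    fix i
    have "\<bar>H $ i \<bullet> z\<bar>^2 \<le> (norm (H $ i) * norm z)^2"
      by (rule power_mono[OF Cauchy_Schwarz_ineq2]) simp
    then show "(H $ i \<bullet> z)^2 \<le> (norm (H $ i))^2 * (norm z)^2"
      by (simp add: power_mult_distrib)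
  qed
  also have "\<dots> = (norm H * norm z)^2"
    by (simp add: power_mult_distrib sum_distrib_right[symmetric] power2_norm_eq_inner inner_vec_def)
  finally show ?thesis by (rule power2_le_imp_le) simp
qed

lemma norm_matrix_vector_mult_card_1:
  assumes "CARD('m) = 1"
  shows "norm ((H::real^'m^'n) *v z) = norm H * norm z"
proof -
  obtain j where U: "(UNIV::'m set) = {j}" using assms card_1_singletonE by blast
  have "norm (H *v z) ^ 2 = (\<Sum>i\<in>UNIV. (H $ i $ j)^2) * (z $ j)^2"
    unfolding power2_norm_eq_inner
    by (simp add: inner_vec_def matrix_vector_mult_def U power_mult_distrib sum_distrib_right
        power2_eq_square sum_distrib_left mult_ac)
  also have "\<dots> = (norm H * norm z)^2"
    unfolding power_mult_distrib power2_norm_eq_inner by (simp add: inner_vec_def U power2_eq_square)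
  finally show ?thesis by simp
qed

lemma norm_add_ge_inner_sgn:
  fixes d v :: "'a::real_inner"
  shows "norm d + sgn d \<bullet> v \<le> norm (d + v)"
proof (cases "d = 0")
  case False
  have "sgn d \<bullet> d = norm d"
    using False by (simp add: sgn_div_norm divide_inverse power2_norm_eq_inner[symmetric]
        power2_eq_square)
  moreover have "sgn d \<bullet> (d + v) \<le> norm (d + v)"
    using norm_cauchy_schwarz[of "sgn d" "d + v"] False by (simp add: norm_sgn)
  ultimately show ?thesis by (simp add: inner_add_right)
qed simp

lemma norm_add_le_inner_sgn_quadratic:
  fixes d v :: "'a::real_inner"
  assumes "d \<noteq> 0"
  shows "norm (d + v) \<le> norm d + sgn d \<bullet> v + (norm v)^2 / (2 * norm d)"
proof -
  define a where "a = norm d"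
  define b where "b = 2 * (d \<bullet> v) + (norm v)^2"
  have a: "a > 0" using assms by (simp add: a_def)
  have sq: "(norm (d + v))^2 = a^2 + b"
    by (simp add: a_def b_def power2_norm_eq_inner inner_add_left inner_add_right inner_commute)
  have rhs: "norm d + sgn d \<bullet> v + (norm v)^2 / (2 * norm d) = a + b / (2*a)"
    using a by (simp add: a_def b_def sgn_div_norm field_simps)
  \<comment> \<open>\<open>a + b/(2a)\<close> is the tangent line of \<open>sqrt\<close> at \<open>a\<^sup>2\<close>, evaluated at \<open>a\<^sup>2 + b \<ge> 0\<close>.\<close>
  have "b \<ge> -(a^2)" using sq zero_le_power2[of "norm (d + v)"] by linarith
  then have "b / (2*a) \<ge> -(a^2) / (2*a)" using a by (intro divide_right_mono) auto
  then have nonneg: "a + b / (2*a) \<ge> 0" using a by (simp add: power2_eq_square)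
  have "(a + b/(2*a))^2 = a^2 + b + (b/(2*a))^2"
    using a by (simp add: power2_eq_square field_simps)
  then have "(norm (d + v))^2 \<le> (a + b / (2*a))^2" using sq by simp
  then have "norm (d + v) \<le> a + b / (2*a)" using nonneg by (rule power2_le_imp_le)
  then show ?thesis using rhs by simp
qed

lemma sum_norm_add_ge_first_order:
  fixes z :: "'a \<Rightarrow> real^'m" and d :: "'a \<Rightarrow> real^'n" and H :: "real^'m^'n"
  shows "(\<Sum>t\<in>K. norm (d t)) + (\<Sum>t\<in>K. outer (z t) (sgn (d t))) \<bullet> transpose H
           \<le> (\<Sum>t\<in>K. norm (H *v z t + d t))"
  unfolding inner_sum_left sum.distrib[symmetric] inner_matrix_vector_mult_eq_inner_outer[symmetric]
  by (rule sum_mono) (simp add: add.commute norm_add_ge_inner_sgn)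

lemma sum_norm_add_le_second_order:
  fixes z :: "'a \<Rightarrow> real^'m" and d :: "'a \<Rightarrow> real^'n" and H :: "real^'m^'n"
  assumes "\<And>t. t \<in> K \<Longrightarrow> d t \<noteq> 0"
  shows "(\<Sum>t\<in>K. norm (H *v z t + d t))
           \<le> (\<Sum>t\<in>K. norm (d t)) + (\<Sum>t\<in>K. outer (z t) (sgn (d t))) \<bullet> transpose H
              + (norm H)^2 * (\<Sum>t\<in>K. (norm (z t))^2 / (2 * norm (d t)))"
proof -
  have "norm (H *v z t + d t)
          \<le> norm (d t) + sgn (d t) \<bullet> (H *v z t) + (norm H)^2 * ((norm (z t))^2 / (2 * norm (d t)))"
    if "t \<in> K" for t
  proof -
    have "norm (H *v z t + d t) \<le> norm (d t) + sgn (d t) \<bullet> (H *v z t)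
            + (norm (H *v z t))^2 / (2 * norm (d t))"
      using norm_add_le_inner_sgn_quadratic[OF assms[OF that], of "H *v z t"]
      by (simp add: add.commute[of "H *v z t"])
    also have "(norm (H *v z t))^2 \<le> (norm H * norm (z t))^2"
      by (intro power_mono norm_matrix_vector_mult_le) simp
    finally show ?thesis by (simp add: power_mult_distrib divide_right_mono)
  qed
  then show ?thesis
    unfolding inner_sum_left sum_distrib_left sum.distrib[symmetric]
      inner_matrix_vector_mult_eq_inner_outer[symmetric]
    by (rule sum_mono)
qed

lemma zero_minimizer_imp_norm_gradient_le:
  fixes z :: "'a \<Rightarrow> real^'m" and d :: "'a \<Rightarrow> real^'n"
  assumes nonzero: "\<And>t. t \<in> K \<Longrightarrow> d t \<noteq> 0"
    and min: "\<And>H :: real^'m^'n. (\<Sum>t\<in>K. norm (d t))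
               \<le> (\<Sum>t\<in>K. norm (H *v z t + d t)) + (\<Sum>t\<in>L. norm (H *v z t))"
  shows "norm (\<Sum>t\<in>K. outer (z t) (sgn (d t))) \<le> (\<Sum>t\<in>L. norm (z t))"
proof (rule ccontr)
  define M where "M = (\<Sum>t\<in>K. outer (z t) (sgn (d t)))"
  define N where "N = norm M"
  define S where "S = (\<Sum>t\<in>L. norm (z t))"
  define C where "C = (\<Sum>t\<in>K. (norm (z t))^2 / (2 * norm (d t)))"
  assume "\<not> ?thesis"
  then have "S < N" by (simp add: M_def N_def S_def)
  have "S \<ge> 0" "C \<ge> 0" by (simp_all add: S_def C_def sum_nonneg)
  \<comment> \<open>The step size is chosen so that \<open>e N C < N - S\<close>.\<close>
  define e where "e = (N - S) / (N * C + 1)"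
  have "N > 0" using \<open>S < N\<close> \<open>S \<ge> 0\<close> by linarith
  then have "N * C + 1 > 0" using \<open>C \<ge> 0\<close> mult_nonneg_nonneg[of N C] by linarith
  then have "e > 0" "e * (N * C + 1) = N - S" using \<open>S < N\<close> by (simp_all add: e_def)
  then have eNC: "e * N * C < N - S" using \<open>e > 0\<close> by (simp add: algebra_simps)
  define H where "H = (-e) *\<^sub>R transpose M"
  have norm_H: "norm H = e * N"
    using \<open>e > 0\<close> by (simp add: H_def N_def norm_transpose)
  have "transpose H = (-e) *\<^sub>R M"
    by (simp only: H_def transpose_scalar transpose_transpose)
  then have "M \<bullet> transpose H = - e * N^2"
    by (simp add: N_def power2_norm_eq_inner)
  then have "(\<Sum>t\<in>K. norm (H *v z t + d t)) \<le> (\<Sum>t\<in>K. norm (d t)) - e * N^2 + (e * N)^2 * C"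
    using sum_norm_add_le_second_order[of K d H z] nonzero by (simp add: M_def C_def norm_H)
  moreover have "(\<Sum>t\<in>L. norm (H *v z t)) \<le> e * N * S"
    unfolding S_def sum_distrib_left
    by (rule sum_mono) (metis norm_H norm_matrix_vector_mult_le)
  ultimately have "(\<Sum>t\<in>K. norm (d t)) \<le> (\<Sum>t\<in>K. norm (d t)) - e * N * ((N - S) - e * N * C)"
    using min[of H] by (simp add: algebra_simps power2_eq_square)
  moreover have "e * N * ((N - S) - e * N * C) > 0"
    using \<open>e > 0\<close> \<open>N > 0\<close> eNC by simp
  ultimately show False by linarith
qed

lemma norm_gradient_le_imp_zero_minimizer:
  fixes z :: "'a \<Rightarrow> real^'m" and d :: "'a \<Rightarrow> real^'n" and H :: "real^'m^'n"
  assumes "CARD('m) = 1"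
    and "norm (\<Sum>t\<in>K. outer (z t) (sgn (d t))) \<le> (\<Sum>t\<in>L. norm (z t))"
  shows "(\<Sum>t\<in>K. norm (d t)) \<le> (\<Sum>t\<in>K. norm (H *v z t + d t)) + (\<Sum>t\<in>L. norm (H *v z t))"
proof -
  define M where "M = (\<Sum>t\<in>K. outer (z t) (sgn (d t)))"
  have "norm M * norm H \<le> (\<Sum>t\<in>L. norm (z t)) * norm H"
    using assms(2) by (simp add: M_def mult_right_mono)
  also have "\<dots> = (\<Sum>t\<in>L. norm (H *v z t))"
    by (simp add: norm_matrix_vector_mult_card_1[OF assms(1)] sum_distrib_left mult.commute)
  moreover have "- (norm M * norm H) \<le> M \<bullet> transpose H"
    using Cauchy_Schwarz_ineq2[of M "transpose H"] by (simp add: norm_transpose)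
  ultimately show ?thesis
    using sum_norm_add_ge_first_order[of d K z H] by (simp add: M_def)
qed

lemma cost_eq_sum_residual_split:
  "cost f Abar d T (Abar - H)
     = (\<Sum>t | t < T \<and> d t \<noteq> 0. norm (H *v f (traj f Abar d t) + d t))
       + (\<Sum>t | t < T \<and> d t = 0. norm (H *v f (traj f Abar d t)))"
proof -
  have "{..<T} = {t. t < T \<and> d t \<noteq> 0} \<union> {t. t < T \<and> d t = 0}" by auto
  then have "cost f Abar d T (Abar - H)
      = (\<Sum>t | t < T \<and> d t \<noteq> 0. norm (H *v f (traj f Abar d t) + d t))
        + (\<Sum>t | t < T \<and> d t = 0. norm (H *v f (traj f Abar d t) + d t))"
    unfolding cost_def by (simp add: sum.union_disjoint disjoint_iff)
  then show ?thesis by simp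
qed

lemma is_global_min_iff_sum_residual:
  "is_global_min f Abar d T \<longleftrightarrow>
     (\<forall>H. (\<Sum>t | t < T \<and> d t \<noteq> 0. norm (d t))
            \<le> (\<Sum>t | t < T \<and> d t \<noteq> 0. norm (H *v f (traj f Abar d t) + d t))
              + (\<Sum>t | t < T \<and> d t = 0. norm (H *v f (traj f Abar d t))))"
proof -
  have "(\<forall>A. P A) \<longleftrightarrow> (\<forall>H. P (Abar - H))" for P
    by (auto dest: spec[of _ "Abar - _"])
  then have "is_global_min f Abar d T \<longleftrightarrow> (\<forall>H. cost f Abar d T Abar \<le> cost f Abar d T (Abar - H))"
    unfolding is_global_min_def .
  moreover have "cost f Abar d T Abar = (\<Sum>t | t < T \<and> d t \<noteq> 0. norm (d t))"
    using cost_eq_sum_residual_split[of f Abar d T 0]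
    by (simp only: diff_zero matrix_vector_mult_0 add_0 norm_zero sum.neutral_const)
  ultimately show ?thesis by (simp only: cost_eq_sum_residual_split)
qed

theorem corollary2:
  fixes f :: "real^'n \<Rightarrow> real^'m"
    and Abar :: "real^'m^'n"
    and d :: "nat \<Rightarrow> real^'n"
    and T :: nat
  defines "x \<equiv> traj f Abar d"
    and "K \<equiv> {t. t < T \<and> d t \<noteq> 0}"
    and "Kc \<equiv> {t. t < T \<and> d t = 0}"
  shows "(is_global_min f Abar d T \<longrightarrow>
            frob_norm (\<Sum>t\<in>K. outer (f (x t)) (inverse (norm (d t)) *\<^sub>R d t))
              \<le> (\<Sum>t\<in>Kc. norm (f (x t))))
       \<and> (CARD('m) = 1 \<longrightarrow>
            frob_norm (\<Sum>t\<in>K. outer (f (x t)) (inverse (norm (d t)) *\<^sub>R d t))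
              \<le> (\<Sum>t\<in>Kc. norm (f (x t)))
            \<longrightarrow> is_global_min f Abar d T)"
proof -
  have gradient: "frob_norm (\<Sum>t\<in>K. outer (f (x t)) (inverse (norm (d t)) *\<^sub>R d t))
      = norm (\<Sum>t\<in>K. outer (f (x t)) (sgn (d t)))"
    by (simp add: frob_norm_eq_norm sgn_div_norm)
  have global_min: "is_global_min f Abar d T \<longleftrightarrow> (\<forall>H :: real^'m^'n. (\<Sum>t\<in>K. norm (d t))
      \<le> (\<Sum>t\<in>K. norm (H *v f (x t) + d t)) + (\<Sum>t\<in>Kc. norm (H *v f (x t))))"
    unfolding is_global_min_iff_sum_residual x_def K_def Kc_def ..
  have nonzero: "t \<in> K \<Longrightarrow> d t \<noteq> 0" for t by (simp add: K_def)
  show ?thesis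
    unfolding gradient global_min
  proof (intro conjI impI allI)
    assume "\<forall>H :: real^'m^'n. (\<Sum>t\<in>K. norm (d t))
      \<le> (\<Sum>t\<in>K. norm (H *v f (x t) + d t)) + (\<Sum>t\<in>Kc. norm (H *v f (x t)))"
    then show "norm (\<Sum>t\<in>K. outer (f (x t)) (sgn (d t))) \<le> (\<Sum>t\<in>Kc. norm (f (x t)))"
      using zero_minimizer_imp_norm_gradient_le[of K d "\<lambda>t. f (x t)" Kc] nonzero by blast
  next
    fix H :: "real^'m^'n"
    assume "CARD('m) = 1"
      and "norm (\<Sum>t\<in>K. outer (f (x t)) (sgn (d t))) \<le> (\<Sum>t\<in>Kc. norm (f (x t)))"
    then show "(\<Sum>t\<in>K. norm (d t))
        \<le> (\<Sum>t\<in>K. norm (H *v f (x t) + d t)) + (\<Sum>t\<in>Kc. norm (H *v f (x t)))"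
      by (rule norm_gradient_le_imp_zero_minimizer)
  qed
qed

end
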